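(* For any $z>1/\rho$ and any $t\ge0$, $$P_t(z)-P_{t+1}(z)\ge(\rho z-1)K_t(z).$$
   Context: $m$-twist system with parameter $\rho\in(0,1/2]$ on $n$ agents: at each time $t$ the agents are relabeled so that their positions satisfy $x_1(t)\le\dots\le x_n(t)$. A partition of $[n]$ into at most $m$ intervals of consecutive indices $[u_{t,l},v_{t,l}]$ (blocks) is given. The next sorted positions $y_i=x_i(t+1)$ (agents keep their ranks) satisfy, for every block $[u,v]$ and $i\in[u,v]$, $$(1-\rho)x_u+\rho x_{\min\{i+1,v\}}\le y_i\le\rho x_{\max\{i-1,u\}}+(1-\rho)x_v.$$ Define $P_t(z)=\sum_{k=1}^nx_k(t)z^k$. Let $v(k)$ be the right endpoint of the block containing $k$ at time $t$, and $K_t(z)=\sum_{k=1}^n(x_{v(k)}(t)-x_k(t))z^k$. *)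

theory Defs
  imports Complex_Main
begin

text \<open>Agents are indexed 1..n; positions at a time are a function nat => real.\<close>

definition sorted_pos :: "nat \<Rightarrow> (nat \<Rightarrow> real) \<Rightarrow> bool" where
  "sorted_pos n x \<longleftrightarrow> (\<forall>i j. 1 \<le> i \<longrightarrow> i \<le> j \<longrightarrow> j \<le> n \<longrightarrow> x i \<le> x j)"

text \<open>A partition of {1..n} into at most m blocks of consecutive indices;
  a block is the pair (u,v) standing for the interval [u,v].\<close>
definition interval_partition :: "nat \<Rightarrow> nat \<Rightarrow> (nat \<times> nat) set \<Rightarrow> bool" where
  "interval_partition n m Bs \<longleftrightarrow> finite Bs \<and> card Bs \<le> m \<and>
     (\<forall>b\<in>Bs. 1 \<le> fst b \<and> fst b \<le> snd b \<and> snd b \<le> n) \<and>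
     (\<forall>k\<in>{1..n}. \<exists>!b. b \<in> Bs \<and> fst b \<le> k \<and> k \<le> snd b)"

definition blk_right :: "(nat \<times> nat) set \<Rightarrow> nat \<Rightarrow> nat" where
  "blk_right Bs k = snd (THE b. b \<in> Bs \<and> fst b \<le> k \<and> k \<le> snd b)"

text \<open>One step of the m-twist system: x = sorted positions at time t, y at time t+1.\<close>
definition twist_step :: "real \<Rightarrow> (nat \<times> nat) set \<Rightarrow> (nat \<Rightarrow> real) \<Rightarrow> (nat \<Rightarrow> real) \<Rightarrow> bool" where
  "twist_step \<rho> Bs x y \<longleftrightarrow>
     (\<forall>(u,v)\<in>Bs. \<forall>i\<in>{u..v}.
        (1 - \<rho>) * x u + \<rho> * x (min (i+1) v) \<le> y i \<and>
        y i \<le> \<rho> * x (max (i-1) u) + (1 - \<rho>) * x v)"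

definition Ppoly :: "nat \<Rightarrow> (nat \<Rightarrow> real) \<Rightarrow> real \<Rightarrow> real" where
  "Ppoly n x z = (\<Sum>k=1..n. x k * z ^ k)"

definition Kpoly :: "nat \<Rightarrow> (nat \<times> nat) set \<Rightarrow> (nat \<Rightarrow> real) \<Rightarrow> real \<Rightarrow> real" where
  "Kpoly n Bs x z = (\<Sum>k=1..n. (x (blk_right Bs k) - x k) * z ^ k)"

end

theory Submission
  imports Defs
begin

text \<open>With the gaps \<open>g k = x (v k) - x k \<ge> 0\<close>
  we have \<open>K(z) = \<Sum> g k * z^k\<close>. The upper half of the twist rule rearranges to
  \<open>x k - y k \<ge> \<rho> * g (k-1) - g k\<close>: inside a block this is the rule itself, and when \<open>k\<close>
  starts a block, \<open>k-1\<close> ends the previous one, so \<open>g (k-1) = 0\<close>. Summing against \<open>z^k\<close>,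
  the shifted sum \<open>\<Sum> g (k-1) * z^k\<close> is \<open>z * K(z)\<close> because the last agent ends its block.\<close>

definition block_of :: "(nat \<times> nat) set \<Rightarrow> nat \<Rightarrow> nat \<times> nat" where
  "block_of Bs k = (THE b. b \<in> Bs \<and> fst b \<le> k \<and> k \<le> snd b)"

definition block_gap :: "(nat \<times> nat) set \<Rightarrow> (nat \<Rightarrow> real) \<Rightarrow> nat \<Rightarrow> real" where
  "block_gap Bs x k = x (blk_right Bs k) - x k"

lemma blk_right_eq_snd_block_of: "blk_right Bs k = snd (block_of Bs k)"
  unfolding blk_right_def block_of_def ..

lemma Kpoly_eq_sum_block_gap: "Kpoly n Bs x z = (\<Sum>k=1..n. block_gap Bs x k * z ^ k)"
  unfolding Kpoly_def block_gap_def ..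

lemma interval_partition_block_bounds:
  assumes "interval_partition n m Bs" "b \<in> Bs"
  shows "1 \<le> fst b" "fst b \<le> snd b" "snd b \<le> n"
  using assms unfolding interval_partition_def by blast+

lemma block_of_mem:
  assumes "interval_partition n m Bs" "k \<in> {1..n}"
  shows "block_of Bs k \<in> Bs" "fst (block_of Bs k) \<le> k" "k \<le> snd (block_of Bs k)"
proof -
  have "\<exists>!b. b \<in> Bs \<and> fst b \<le> k \<and> k \<le> snd b"
    using assms unfolding interval_partition_def by blast
  from theI'[OF this] show "block_of Bs k \<in> Bs" "fst (block_of Bs k) \<le> k" "k \<le> snd (block_of Bs k)"
    unfolding block_of_def by blast+
qed

lemma block_of_eqI:
  assumes "interval_partition n m Bs" "k \<in> {1..n}" "b \<in> Bs" "fst b \<le> k" "k \<le> snd b"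
  shows "block_of Bs k = b"
proof -
  have "\<exists>!b. b \<in> Bs \<and> fst b \<le> k \<and> k \<le> snd b"
    using assms unfolding interval_partition_def by blast
  from the1_equality[OF this] show ?thesis
    using assms unfolding block_of_def by blast
qed

lemma block_of_Suc_cases:
  assumes P: "interval_partition n m Bs" and k: "1 \<le> k" "k < n"
  shows "block_of Bs (Suc k) = block_of Bs k \<or>
         blk_right Bs k = k \<and> fst (block_of Bs (Suc k)) = Suc k"
proof (cases "Suc k \<le> blk_right Bs k")
  case True
  then have "block_of Bs (Suc k) = block_of Bs k"
    using block_of_eqI[OF P, of "Suc k" "block_of Bs k"] block_of_mem[OF P, of k] k
    by (auto simp: blk_right_eq_snd_block_of)
  then show ?thesis ..
next
  case False
  then have right: "blk_right Bs k = k"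
    using block_of_mem(3)[OF P, of k] k by (simp add: blk_right_eq_snd_block_of)
  have "fst (block_of Bs (Suc k)) = Suc k"
  proof (rule ccontr)
    assume "fst (block_of Bs (Suc k)) \<noteq> Suc k"
    then have "fst (block_of Bs (Suc k)) \<le> k"
      using block_of_mem(2)[OF P, of "Suc k"] k by simp
    then have "block_of Bs k = block_of Bs (Suc k)"
      using block_of_eqI[OF P, of k "block_of Bs (Suc k)"] block_of_mem[OF P, of "Suc k"] k
      by auto
    then show False
      using False block_of_mem(3)[OF P, of "Suc k"] k by (simp add: blk_right_eq_snd_block_of)
  qed
  with right show ?thesis by blast
qed

lemma blk_right_last:
  assumes "interval_partition n m Bs" "1 \<le> n"
  shows "blk_right Bs n = n"
  using block_of_mem[OF assms(1), of n] interval_partition_block_bounds[OF assms(1)] assms(2)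
  by (simp add: blk_right_eq_snd_block_of le_antisym)

lemma block_of_first:
  assumes "interval_partition n m Bs" "1 \<le> n"
  shows "fst (block_of Bs 1) = 1"
  using block_of_mem[OF assms(1), of 1] interval_partition_block_bounds[OF assms(1)] assms(2)
  by (simp add: le_antisym)

lemma block_gap_nonneg:
  assumes "interval_partition n m Bs" "sorted_pos n x" "k \<in> {1..n}"
  shows "0 \<le> block_gap Bs x k"
  using block_of_mem[OF assms(1,3)] interval_partition_block_bounds[OF assms(1)] assms(2,3)
  unfolding block_gap_def sorted_pos_def blk_right_eq_snd_block_of by auto

lemma twist_step_upper:
  assumes "interval_partition n m Bs" "twist_step \<rho> Bs x y" "k \<in> {1..n}"
  shows "y k \<le> \<rho> * x (max (k - 1) (fst (block_of Bs k))) + (1 - \<rho>) * x (blk_right Bs k)"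
  using assms(2) block_of_mem[OF assms(1,3)]
  unfolding twist_step_def blk_right_eq_snd_block_of by fastforce

lemma twist_step_decrease_block_start:
  assumes P: "interval_partition n m Bs" and "twist_step \<rho> Bs x y" "sorted_pos n x" "0 \<le> \<rho>"
    and k: "k \<in> {1..n}" "fst (block_of Bs k) = k"
  shows "x k - y k \<ge> - block_gap Bs x k"
proof -
  have "y k \<le> x k + (1 - \<rho>) * block_gap Bs x k"
    using twist_step_upper[OF P assms(2) k(1)] k(2)
    by (simp add: block_gap_def algebra_simps)
  moreover have "\<rho> * block_gap Bs x k \<ge> 0"
    using block_gap_nonneg[OF P assms(3) k(1)] assms(4) by simp
  ultimately show ?thesis by (simp add: algebra_simps)
qed

lemma twist_step_decrease_Suc:
  assumes P: "interval_partition n m Bs" and "twist_step \<rho> Bs x y" "sorted_pos n x" "0 \<le> \<rho>"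
    and k: "1 \<le> k" "k < n"
  shows "x (Suc k) - y (Suc k) \<ge> \<rho> * block_gap Bs x k - block_gap Bs x (Suc k)"
  using block_of_Suc_cases[OF P k]
proof
  assume same: "block_of Bs (Suc k) = block_of Bs k"
  then have "max k (fst (block_of Bs (Suc k))) = k"
    using block_of_mem(2)[OF P, of k] k by simp
  moreover have "blk_right Bs (Suc k) = blk_right Bs k"
    using same by (simp add: blk_right_eq_snd_block_of)
  ultimately show ?thesis
    using twist_step_upper[OF P assms(2), of "Suc k"] k
    by (simp add: block_gap_def algebra_simps)
next
  assume "blk_right Bs k = k \<and> fst (block_of Bs (Suc k)) = Suc k"
  then show ?thesis
    using twist_step_decrease_block_start[OF P assms(2-4), of "Suc k"] k
    by (simp add: block_gap_def)
qed

lemma sum_atLeast1_atMost_split_first: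
  fixes f :: "nat \<Rightarrow> 'a::comm_monoid_add"
  assumes "1 \<le> n"
  shows "(\<Sum>k=1..n. f k) = f 1 + (\<Sum>k=1..<n. f (Suc k))"
  using assms sum.atLeast_Suc_atMost[of 1 n f] sum.shift_bounds_Suc_ivl[of f 1 n]
  by (simp add: atLeastLessThanSuc_atLeastAtMost)

lemma twist_step_weighted_decrease:
  fixes z :: real
  assumes P: "interval_partition n m Bs" and "twist_step \<rho> Bs x y" "sorted_pos n x" "0 \<le> \<rho>"
    and "0 \<le> z"
  shows "(\<Sum>k=1..n. (x k - y k) * z ^ k) \<ge>
         \<rho> * (\<Sum>k=1..<n. block_gap Bs x k * z ^ Suc k) - (\<Sum>k=1..n. block_gap Bs x k * z ^ k)"
proof (cases "n = 0")
  case False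
  then have n: "1 \<le> n" by simp
  have first: "(x 1 - y 1) * z \<ge> - block_gap Bs x 1 * z"
    using twist_step_decrease_block_start[OF P assms(2-4), of 1] block_of_first[OF P n] n assms(5)
    by (intro mult_right_mono) auto
  have rest: "(\<Sum>k=1..<n. (x (Suc k) - y (Suc k)) * z ^ Suc k) \<ge>
      (\<Sum>k=1..<n. (\<rho> * block_gap Bs x k - block_gap Bs x (Suc k)) * z ^ Suc k)"
    using twist_step_decrease_Suc[OF P assms(2-4)] assms(5)
    by (intro sum_mono mult_right_mono) auto
  have "\<rho> * (\<Sum>k=1..<n. block_gap Bs x k * z ^ Suc k) - (\<Sum>k=1..n. block_gap Bs x k * z ^ k)
      = \<rho> * (\<Sum>k=1..<n. block_gap Bs x k * z ^ Suc k)
        - (block_gap Bs x 1 * z + (\<Sum>k=1..<n. block_gap Bs x (Suc k) * z ^ Suc k))"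
    using sum_atLeast1_atMost_split_first[OF n, of "\<lambda>k. block_gap Bs x k * z ^ k"] by simp
  also have "\<dots> = - block_gap Bs x 1 * z +
        (\<Sum>k=1..<n. (\<rho> * block_gap Bs x k - block_gap Bs x (Suc k)) * z ^ Suc k)"
    by (simp add: sum_distrib_left sum_subtractf left_diff_distrib mult.assoc)
  also have "\<dots> \<le> (\<Sum>k=1..n. (x k - y k) * z ^ k)"
    using first rest sum_atLeast1_atMost_split_first[OF n, of "\<lambda>k. (x k - y k) * z ^ k"]
    by simp
  finally show ?thesis .
qed simp

lemma shifted_block_gap_sum:
  assumes "interval_partition n m Bs"
  shows "(\<Sum>k=1..<n. block_gap Bs x k * z ^ Suc k) = z * (\<Sum>k=1..n. block_gap Bs x k * z ^ k)"
proof (cases "n = 0")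
  case False
  then have "block_gap Bs x n = 0"
    using blk_right_last[OF assms] by (simp add: block_gap_def)
  moreover have "{1..n} = insert n {1..<n}" using False by auto
  ultimately show ?thesis
    by (simp add: sum_distrib_left mult.assoc mult.left_commute)
qed simp

theorem lemma4:
  fixes n m :: nat and \<rho> z :: real
    and x :: "nat \<Rightarrow> nat \<Rightarrow> real"
    and B :: "nat \<Rightarrow> (nat \<times> nat) set"
  assumes rho: "0 < \<rho>" "\<rho> \<le> 1/2"
    and sorted: "\<And>t. sorted_pos n (x t)"
    and part: "\<And>t. interval_partition n m (B t)"
    and step: "\<And>t. twist_step \<rho> (B t) (x t) (x (Suc t))"
    and z: "z > 1/\<rho>"
  shows "Ppoly n (x t) z - Ppoly n (x (Suc t)) z \<ge> (\<rho> * z - 1) * Kpoly n (B t) (x t) z"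
proof -
  have "0 < 1/\<rho>" using rho by simp
  with z have "0 \<le> z" by linarith
  have "Ppoly n (x t) z - Ppoly n (x (Suc t)) z = (\<Sum>k=1..n. (x t k - x (Suc t) k) * z ^ k)"
    unfolding Ppoly_def by (simp add: sum_subtractf left_diff_distrib)
  also have "\<dots> \<ge> \<rho> * (z * Kpoly n (B t) (x t) z) - Kpoly n (B t) (x t) z"
    using twist_step_weighted_decrease[OF part step sorted _ \<open>0 \<le> z\<close>, of t] rho
    unfolding shifted_block_gap_sum[OF part] Kpoly_eq_sum_block_gap by simp
  finally show ?thesis by (simp add: algebra_simps)
qed

end
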